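(* Let $m \ge 1$ be an integer, let $N \ge 0$ and $s$ be integers with $0 \le s \le N$ and $N + m - 1 > 0$, and let $y \in (0,1)$, all held fixed. For real $n > 0$ let $\beta_n$ denote the Beta-Binomial distribution on $\{0,1,\ldots,m\}$ with probability mass function \[ p(l \mid y, n, m, s, N) = \binom{m}{l}\frac{B(l + ny + s,\; m - l + n(1-y) + N - s)}{B(ny + s,\; n(1-y) + N - s)}, \qquad l = 0,1,\ldots,m, \] where $B(\cdot,\cdot)$ is the Beta function. Let $0 < \underline{n} < \overline{n}$. Then \[ y > \frac{s + m - 1}{N + m - 1} \implies \beta_{\overline{n}} \ge_{\mathrm{st}} \beta_{\underline{n}}, \] and \[ y < \frac{s}{N + m - 1} \implies \beta_{\overline{n}} \le_{\mathrm{st}} \beta_{\underline{n}}. \]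
   Context: For two probability distributions $P, Q$ on $\{0,1,\ldots,m\}$, first-order stochastic dominance $P \ge_{\mathrm{st}} Q$ means $P(\{l' : l' > l\}) \ge Q(\{l' : l' > l\})$ for every $l$ (equivalently, the cumulative distribution function of $P$ is pointwise no larger than that of $Q$); $P \le_{\mathrm{st}} Q$ means $Q \ge_{\mathrm{st}} P$. *)

theory Defs
  imports "HOL-Analysis.Analysis"
begin

definition betabin_pmf :: "real \<Rightarrow> real \<Rightarrow> nat \<Rightarrow> int \<Rightarrow> int \<Rightarrow> nat \<Rightarrow> real" where
  "betabin_pmf y n m s N l =
     real (m choose l) *
     Beta (real l + n * y + real_of_int s) (real m - real l + n * (1 - y) + real_of_int N - real_of_int s)
     / Beta (n * y + real_of_int s) (n * (1 - y) + real_of_int N - real_of_int s)"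

definition st_ge :: "nat \<Rightarrow> (nat \<Rightarrow> real) \<Rightarrow> (nat \<Rightarrow> real) \<Rightarrow> bool" where
  "st_ge m P Q \<longleftrightarrow> (\<forall>l. (\<Sum>l'\<in>{l<..m}. P l') \<ge> (\<Sum>l'\<in>{l<..m}. Q l'))"

end

theory Submission
  imports Defs
begin

text \<open>
  In rising-factorial form the Beta-Binomial mass function with Beta parameters
  \<open>a = n y + s\<close>, \<open>b = n (1 - y) + N - s\<close> satisfies
  \<open>p(l+1)/p(l) = (a + l)(m - l) / ((l + 1)(b + m - l - 1))\<close>.
  Hence the likelihood ratio of \<open>\<beta>\<^sub>n'\<close> against \<open>\<beta>\<^sub>n\<close> is nondecreasing on
  \<open>{0..m}\<close> as soon as \<open>(a' + l)(b + m - 1 - l) \<ge> (a + l)(b' + m - 1 - l)\<close> for all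
  \<open>l < m\<close>, and the difference of the two sides is \<open>(n' - n)(y (N + m - 1) - s - l)\<close>.
  Under either hypothesis on \<open>y\<close> this has a constant sign, and a monotone likelihood
  ratio implies first-order stochastic dominance.
\<close>

lemma Beta_add_of_nat:
  fixes a b :: real
  assumes "a > 0" "b > 0"
  shows "Beta (a + real k) (b + real j) =
           Beta a b * pochhammer a k * pochhammer b j / pochhammer (a + b) (k + j)"
proof -
  have Gamma_add: "Gamma (x + real i) = pochhammer x i * Gamma x" if "x > 0" for x :: real and i
  proof -
    have "x \<notin> \<int>\<^sub>\<le>\<^sub>0"
      using that by (auto elim!: nonpos_Ints_cases)
    then show ?thesis
      using pochhammer_Gamma[of x i] Gamma_real_pos[OF that] by (simp add: field_simps)
  qed
  have "a + real k + (b + real j) = a + b + real (k + j)"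
    by simp
  then show ?thesis
    unfolding Beta_def Gamma_add[OF assms(1)] Gamma_add[OF assms(2)]
    using assms Gamma_add[of "a + b" "k + j"] pochhammer_pos[of "a + b" "k + j"]
    by (simp add: field_simps)
qed

definition beta_binomial_pmf :: "real \<Rightarrow> real \<Rightarrow> nat \<Rightarrow> nat \<Rightarrow> real" where
  "beta_binomial_pmf a b m l =
     real (m choose l) * pochhammer a l * pochhammer b (m - l) / pochhammer (a + b) m"

lemma betabin_pmf_eq_beta_binomial_pmf:
  assumes "n * y + real_of_int s > 0" "n * (1 - y) + real_of_int N - real_of_int s > 0" "l \<le> m"
  shows "betabin_pmf y n m s N l =
           beta_binomial_pmf (n * y + real_of_int s) (n * (1 - y) + real_of_int N - real_of_int s) m l"
proof -
  define a where "a = n * y + real_of_int s"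
  define b where "b = n * (1 - y) + real_of_int N - real_of_int s"
  have shift_a: "real l + n * y + real_of_int s = a + real l"
    by (simp add: a_def)
  have shift_b: "real m - real l + n * (1 - y) + real_of_int N - real_of_int s = b + real (m - l)"
    using assms(3) by (simp add: b_def of_nat_diff)
  have "Beta (a + real l) (b + real (m - l)) =
          Beta a b * pochhammer a l * pochhammer b (m - l) / pochhammer (a + b) m"
    using Beta_add_of_nat[of a b l "m - l"] assms by (simp add: a_def b_def)
  moreover have "Beta a b > 0"
    using assms by (simp add: Beta_def a_def b_def)
  ultimately show ?thesis
    unfolding betabin_pmf_def beta_binomial_pmf_def shift_a shift_b
      a_def [symmetric] b_def [symmetric]
    by simp
qed

lemma beta_binomial_pmf_pos: "a > 0 \<Longrightarrow> b > 0 \<Longrightarrow> l \<le> m \<Longrightarrow> beta_binomial_pmf a b m l > 0"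
  unfolding beta_binomial_pmf_def by (intro divide_pos_pos mult_pos_pos pochhammer_pos) auto

lemma sum_beta_binomial_pmf:
  assumes "pochhammer (a + b) m \<noteq> 0"
  shows "(\<Sum>l\<le>m. beta_binomial_pmf a b m l) = 1"
  using assms
  by (simp add: beta_binomial_pmf_def pochhammer_binomial_sum flip: sum_divide_distrib)

lemma beta_binomial_pmf_Suc:
  assumes "b > 0" "l < m"
  shows "beta_binomial_pmf a b m (Suc l) =
           beta_binomial_pmf a b m l * ((a + real l) * real (m - l))
           / (real (Suc l) * (b + real (m - Suc l)))"
proof -
  have "Suc l * (m choose Suc l) = (m - l) * (m choose l)"
    by (metis binomial_absorption binomial_absorb_comp)
  then have "real (m choose Suc l) = real (m choose l) * real (m - l) / real (Suc l)"
    by (simp add: field_simps flip: of_nat_mult)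
  moreover have "pochhammer b (m - l) = pochhammer b (m - Suc l) * (b + real (m - Suc l))"
    using assms(2) pochhammer_Suc[of b "m - Suc l"] by (simp add: Suc_diff_Suc)
  moreover have "b + real (m - Suc l) > 0"
    using assms(1) by simp
  ultimately show ?thesis
    by (simp add: beta_binomial_pmf_def pochhammer_Suc mult_ac)
qed

lemma likelihood_ratio_cross_le:
  fixes P Q :: "nat \<Rightarrow> real"
  assumes Qpos: "\<And>l. l \<le> m \<Longrightarrow> Q l > 0"
    and mlr: "\<And>l. l < m \<Longrightarrow> P l * Q (Suc l) \<le> P (Suc l) * Q l"
    and "i \<le> j" "j \<le> m"
  shows "P i * Q j \<le> P j * Q i"
proof -
  have ratio_Suc: "P k / Q k \<le> P (Suc k) / Q (Suc k)" if "k < m" for k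
    using mlr[OF that] Qpos[of k] Qpos[of "Suc k"] that
    by (simp add: divide_simps mult.commute)
  from \<open>i \<le> j\<close> \<open>j \<le> m\<close> have "P i / Q i \<le> P j / Q j"
  proof (induction j rule: dec_induct)
    case (step k)
    then show ?case using ratio_Suc[of k] by simp
  qed simp
  then show ?thesis
    using Qpos[of i] Qpos[of j] assms(3,4) by (simp add: divide_simps mult.commute)
qed

lemma st_ge_if_likelihood_ratio_mono:
  fixes P Q :: "nat \<Rightarrow> real"
  assumes Ppos: "\<And>l. l \<le> m \<Longrightarrow> P l > 0" and Qpos: "\<And>l. l \<le> m \<Longrightarrow> Q l > 0"
    and mlr: "\<And>l. l < m \<Longrightarrow> P l * Q (Suc l) \<le> P (Suc l) * Q l"
    and total: "(\<Sum>l\<le>m. P l) = (\<Sum>l\<le>m. Q l)"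
  shows "st_ge m P Q"
  unfolding st_ge_def
proof
  fix l
  show "(\<Sum>l'\<in>{l<..m}. Q l') \<le> (\<Sum>l'\<in>{l<..m}. P l')"
  proof (cases "l < m")
    case True
    define H where "H = {..l}"
    define T where "T = {l<..m}"
    have split: "sum f {..m} = sum f H + sum f T" for f :: "nat \<Rightarrow> real"
    proof -
      have "{..m} = H \<union> T" "H \<inter> T = {}"
        using True by (auto simp: H_def T_def)
      then show ?thesis by (simp add: sum.union_disjoint H_def T_def)
    qed
    have "(\<Sum>i\<in>H. \<Sum>j\<in>T. P i * Q j) \<le> (\<Sum>i\<in>H. \<Sum>j\<in>T. Q i * P j)"
      using likelihood_ratio_cross_le[of m Q P, OF Qpos mlr]
      by (intro sum_mono) (auto simp: H_def T_def mult.commute)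
    then have cross: "sum P H * sum Q T \<le> sum Q H * sum P T"
      by (simp only: sum_product)
    have QH: "sum Q H = sum P H + sum P T - sum Q T"
      using total by (simp add: split)
    have "(sum P H + sum P T) * (sum Q T - sum P T) \<le> 0"
      using cross unfolding QH by (simp add: algebra_simps)
    moreover have "sum P H + sum P T > 0"
      using Ppos by (simp flip: split) (rule sum_pos2[of _ 0], auto intro: less_imp_le)
    ultimately have "sum Q T \<le> sum P T"
      by (simp add: mult_le_0_iff)
    then show ?thesis
      by (simp add: T_def)
  qed simp
qed

lemma st_ge_cong:
  assumes "st_ge m P Q" "\<And>l. l \<le> m \<Longrightarrow> P l = P' l" "\<And>l. l \<le> m \<Longrightarrow> Q l = Q' l"
  shows "st_ge m P' Q'"
  using assms unfolding st_ge_def by (metis (no_types, lifting) greaterThanAtMost_iff sum.cong)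

lemma st_ge_beta_binomial_pmf:
  assumes "a > 0" "b > 0" "a' > 0" "b' > 0"
    and "\<And>l. l < m \<Longrightarrow>
      (a + real l) * (b' + real (m - Suc l)) \<le> (a' + real l) * (b + real (m - Suc l))"
  shows "st_ge m (beta_binomial_pmf a' b' m) (beta_binomial_pmf a b m)"
proof (rule st_ge_if_likelihood_ratio_mono)
  fix l assume "l < m"
  define ratio where
    "ratio c d = (c + real l) * real (m - l) / (real (Suc l) * (d + real (m - Suc l)))" for c d
  have "ratio a b \<le> ratio a' b'"
    using assms(5)[OF \<open>l < m\<close>] assms(2,4) \<open>l < m\<close> unfolding ratio_def
    by (simp add: divide_simps mult.assoc)
  have "beta_binomial_pmf a' b' m l * beta_binomial_pmf a b m (Suc l) =
          beta_binomial_pmf a' b' m l * beta_binomial_pmf a b m l * ratio a b"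
    using beta_binomial_pmf_Suc[OF assms(2) \<open>l < m\<close>] by (simp add: ratio_def)
  also have "\<dots> \<le> beta_binomial_pmf a' b' m l * beta_binomial_pmf a b m l * ratio a' b'"
    using \<open>ratio a b \<le> ratio a' b'\<close> \<open>l < m\<close> assms(1-4)
    by (intro mult_left_mono) (simp_all add: beta_binomial_pmf_pos less_imp_le)
  also have "\<dots> = beta_binomial_pmf a' b' m (Suc l) * beta_binomial_pmf a b m l"
    using beta_binomial_pmf_Suc[OF assms(4) \<open>l < m\<close>] by (simp add: ratio_def)
  finally show "beta_binomial_pmf a' b' m l * beta_binomial_pmf a b m (Suc l)
               \<le> beta_binomial_pmf a' b' m (Suc l) * beta_binomial_pmf a b m l" .
next
  show "(\<Sum>l\<le>m. beta_binomial_pmf a' b' m l) = (\<Sum>l\<le>m. beta_binomial_pmf a b m l)"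
    using assms pochhammer_pos[of "a + b" m] pochhammer_pos[of "a' + b'" m]
    by (subst (1 2) sum_beta_binomial_pmf) auto
qed (use assms in \<open>simp_all add: beta_binomial_pmf_pos\<close>)

lemma st_ge_betabin_pmf:
  fixes m :: nat and N s :: int and y n n' :: real
  assumes "0 \<le> s" "s \<le> N" "0 < y" "y < 1" "0 < n" "0 < n'"
    and sign: "\<And>l. l < m \<Longrightarrow>
      (n' - n) * (y * (real_of_int N + real m - 1) - (real_of_int s + real l)) \<ge> 0"
  shows "st_ge m (betabin_pmf y n' m s N) (betabin_pmf y n m s N)"
proof -
  define a where "a t = t * y + real_of_int s" for t
  define b where "b t = t * (1 - y) + real_of_int N - real_of_int s" for t
  have pos: "a t > 0" "b t > 0" if "t > 0" for t
  proof -
    have "t * y > 0" "t * (1 - y) > 0" "real_of_int s \<ge> 0" "real_of_int s \<le> real_of_int N"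
      using assms(1-4) that by simp_all
    then show "a t > 0" "b t > 0"
      by (simp_all add: a_def b_def)
  qed
  have "st_ge m (beta_binomial_pmf (a n') (b n') m) (beta_binomial_pmf (a n) (b n) m)"
  proof (rule st_ge_beta_binomial_pmf)
    fix l assume "l < m"
    have "(a n' + real l) * (b n + real (m - Suc l)) - (a n + real l) * (b n' + real (m - Suc l))
            = (n' - n) * (y * (real_of_int N + real m - 1) - (real_of_int s + real l))"
      using \<open>l < m\<close> by (simp add: a_def b_def of_nat_diff algebra_simps)
    then show "(a n + real l) * (b n' + real (m - Suc l))
                 \<le> (a n' + real l) * (b n + real (m - Suc l))"
      using sign[OF \<open>l < m\<close>] by linarith
  qed (use pos assms(5,6) in auto)
  then show ?thesis
    by (rule st_ge_cong)
      (use pos assms(5,6) in \<open>simp_all add: a_def b_def betabin_pmf_eq_beta_binomial_pmf\<close>)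
qed

theorem theorem2:
  fixes m :: nat and N s :: int and y n_lo n_hi :: real
  assumes "m \<ge> 1" and "N \<ge> 0" and "0 \<le> s" and "s \<le> N" and "N + int m - 1 > 0"
    and "0 < y" and "y < 1"
    and "0 < n_lo" and "n_lo < n_hi"
  shows "(y > (real_of_int s + real m - 1) / (real_of_int N + real m - 1) \<longrightarrow>
            st_ge m (betabin_pmf y n_hi m s N) (betabin_pmf y n_lo m s N))
       \<and> (y < real_of_int s / (real_of_int N + real m - 1) \<longrightarrow>
            st_ge m (betabin_pmf y n_lo m s N) (betabin_pmf y n_hi m s N))"
proof -
  have D: "real_of_int N + real m - 1 > 0"
    using assms(5) by linarith
  show ?thesis
  proof (intro conjI impI)
    assume "y > (real_of_int s + real m - 1) / (real_of_int N + real m - 1)"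
    then have "real_of_int s + real l < y * (real_of_int N + real m - 1)" if "l < m" for l
      using D that by (simp add: pos_divide_less_eq)
    with assms show "st_ge m (betabin_pmf y n_hi m s N) (betabin_pmf y n_lo m s N)"
      by (intro st_ge_betabin_pmf) (auto simp: less_imp_le)
  next
    assume "y < real_of_int s / (real_of_int N + real m - 1)"
    then have "y * (real_of_int N + real m - 1) < real_of_int s + real l" for l
      using D by (simp add: pos_less_divide_eq add_strict_increasing2)
    with assms show "st_ge m (betabin_pmf y n_lo m s N) (betabin_pmf y n_hi m s N)"
      by (intro st_ge_betabin_pmf) (auto intro!: mult_nonpos_nonpos simp: less_imp_le)
  qed
qed

end
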